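(* Let $X$ be a CAT(0) space, $T_n:X\to X$ for $n\in\mathbb{N}$, and $(\gamma_n)$ a sequence of positive reals. If $(T_n)$ is jointly firmly nonexpansive with respect to $(\gamma_n)$, then $(T_n)$ is jointly $(P_2)$ with respect to $(\gamma_n)$.
   Context: A geodesic space $(X,d)$ is CAT(0) if for all $z\in X$, all geodesics $\gamma:[a,b]\to X$ and all $t\in[0,1]$, $d^2(z,\gamma((1-t)a+tb))\le(1-t)d^2(z,\gamma(a))+td^2(z,\gamma(b))-t(1-t)d^2(\gamma(a),\gamma(b))$. CAT(0) spaces are uniquely geodesic; for $x,y\in X$ and $t\in[0,1]$, $(1-t)x+ty$ denotes the point at distance $t\,d(x,y)$ from $x$ on the geodesic from $x$ to $y$. The family $(T_n)$ is jointly firmly nonexpansive with respect to $(\gamma_n)$ if for all $n,m\in\mathbb{N}$, $x,y\in X$ and $\alpha,\beta\in[0,1]$ with $(1-\alpha)\gamma_n=(1-\beta)\gamma_m$, one has $d(T_nx,T_my)\le d((1-\alpha)x+\alpha T_nx,(1-\beta)y+\beta T_my)$. It is jointly $(P_2)$ with respect to $(\gamma_n)$ if for all $n,m\in\mathbb{N}$ and $x,y\in X$, $\frac1{\gamma_m}\big(d^2(T_nx,T_my)+d^2(y,T_my)-d^2(y,T_nx)\big)\le\frac1{\gamma_n}\big(d^2(x,T_my)-d^2(x,T_nx)-d^2(T_nx,T_my)\big)$. *)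

theory Defs
  imports "HOL-Analysis.Analysis"
begin

definition geodesic :: "(real \<Rightarrow> 'a::metric_space) \<Rightarrow> real \<Rightarrow> real \<Rightarrow> bool" where
  "geodesic g a b \<longleftrightarrow> a \<le> b \<and> (\<forall>s\<in>{a..b}. \<forall>t\<in>{a..b}. dist (g s) (g t) = \<bar>s - t\<bar>)"

definition geodesic_space :: "'a::metric_space itself \<Rightarrow> bool" where
  "geodesic_space TYPE('a) \<longleftrightarrow>
     (\<forall>x y::'a. \<exists>g a b. geodesic g a b \<and> g a = x \<and> g b = y)"

definition CAT0 :: "'a::metric_space itself \<Rightarrow> bool" where
  "CAT0 TYPE('a) \<longleftrightarrow> geodesic_space TYPE('a) \<and>
     (\<forall>(z::'a) g a b t. geodesic g a b \<and> t \<in> {0..1} \<longrightarrow>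
        (dist z (g ((1 - t) * a + t * b)))\<^sup>2
          \<le> (1 - t) * (dist z (g a))\<^sup>2 + t * (dist z (g b))\<^sup>2
             - t * (1 - t) * (dist (g a) (g b))\<^sup>2)"

text \<open>geo_comb t x y is (1-t)x + ty: the point at parameter t on the geodesic from x to y
  (well defined in a uniquely geodesic space such as a CAT(0) space).\<close>
definition geo_comb :: "real \<Rightarrow> 'a::metric_space \<Rightarrow> 'a \<Rightarrow> 'a" where
  "geo_comb t x y = (THE p. \<exists>g a b. geodesic g a b \<and> g a = x \<and> g b = y \<and> p = g ((1 - t) * a + t * b))"

definition jointly_firmly_nonexpansive ::
  "(nat \<Rightarrow> 'a::metric_space \<Rightarrow> 'a) \<Rightarrow> (nat \<Rightarrow> real) \<Rightarrow> bool" where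
  "jointly_firmly_nonexpansive T gam \<longleftrightarrow>
     (\<forall>n m x y \<alpha> \<beta>. \<alpha> \<in> {0..1} \<and> \<beta> \<in> {0..1} \<and> (1 - \<alpha>) * gam n = (1 - \<beta>) * gam m \<longrightarrow>
        dist (T n x) (T m y) \<le> dist (geo_comb \<alpha> x (T n x)) (geo_comb \<beta> y (T m y)))"

definition jointly_P2 :: "(nat \<Rightarrow> 'a::metric_space \<Rightarrow> 'a) \<Rightarrow> (nat \<Rightarrow> real) \<Rightarrow> bool" where
  "jointly_P2 T gam \<longleftrightarrow>
     (\<forall>n m x y.
        (1 / gam m) * ((dist (T n x) (T m y))\<^sup>2 + (dist y (T m y))\<^sup>2 - (dist y (T n x))\<^sup>2)
        \<le> (1 / gam n) * ((dist x (T m y))\<^sup>2 - (dist x (T n x))\<^sup>2 - (dist (T n x) (T m y))\<^sup>2))"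

end

theory Submission
  imports Defs
begin

text \<open>Firm nonexpansiveness with \<open>1 - \<alpha> = s/\<gamma>\<^sub>n\<close> and \<open>1 - \<beta> = s/\<gamma>\<^sub>m\<close> bounds \<open>d(T\<^sub>nx, T\<^sub>my)\<^sup>2\<close>
  by \<open>d(p,q)\<^sup>2\<close>, where \<open>p = \<alpha>x + (1-\<alpha>)T\<^sub>nx\<close> and \<open>q = \<beta>y + (1-\<beta>)T\<^sub>my\<close>, and the CAT(0)
  inequality applied twice bounds \<open>d(p,q)\<^sup>2\<close> by a quadratic polynomial in \<open>s\<close> whose constant term is
  \<open>d(T\<^sub>nx, T\<^sub>my)\<^sup>2\<close> again. So \<open>s\<^sup>2 C + s B \<ge> 0\<close> for all small \<open>s > 0\<close>, whence \<open>B \<ge> 0\<close>, and \<open>B \<ge> 0\<close>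
  is exactly the \<open>(P\<^sub>2)\<close> inequality.\<close>

lemma geodesic_dist_convex_combination:
  assumes g: "geodesic g a b" and t: "t \<in> {0..1::real}"
  shows "dist (g a) (g ((1-t)*a + t*b)) = t*(b-a)"
    and "dist (g ((1-t)*a + t*b)) (g b) = (1-t)*(b-a)"
    and "dist (g a) (g b) = b - a"
proof -
  have ab: "a \<le> b" and d: "\<And>s u. s \<in> {a..b} \<Longrightarrow> u \<in> {a..b} \<Longrightarrow> dist (g s) (g u) = \<bar>s - u\<bar>"
    using g unfolding geodesic_def by auto
  have "(1-t)*a + t*b = a + t*(b-a)" by algebra
  moreover have "0 \<le> t*(b-a)" "t*(b-a) \<le> b - a"
    using t ab by (auto intro: mult_left_le_one_le)
  ultimately have s: "(1-t)*a + t*b \<in> {a..b}" by auto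
  have ends: "a \<in> {a..b}" "b \<in> {a..b}" using ab by auto
  have "a - ((1-t)*a + t*b) = - (t*(b-a))" "(1-t)*a + t*b - b = - ((1-t)*(b-a))" by algebra+
  then show "dist (g a) (g ((1-t)*a + t*b)) = t*(b-a)"
    and "dist (g ((1-t)*a + t*b)) (g b) = (1-t)*(b-a)"
    using d[OF ends(1) s] d[OF s ends(2)] t ab by simp_all
  show "dist (g a) (g b) = b - a"
    using d[OF ends] ab by simp
qed

lemma CAT0_inequality:
  fixes z :: "'a::metric_space"
  assumes "CAT0 TYPE('a)" and "geodesic g a b" and "t \<in> {0..1}"
  shows "(dist z (g ((1-t)*a + t*b)))\<^sup>2
           \<le> (1-t)*(dist z (g a))\<^sup>2 + t*(dist z (g b))\<^sup>2 - t*(1-t)*(dist (g a) (g b))\<^sup>2"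
  using assms unfolding CAT0_def by blast

text \<open>Points at the same parameter on two geodesics with common endpoints coincide: the CAT(0)
  inequality with \<open>z\<close> one of the points bounds their squared distance by zero.\<close>
lemma CAT0_geo_comb_eq:
  fixes g :: "real \<Rightarrow> 'a::metric_space"
  assumes cat: "CAT0 TYPE('a)" and g: "geodesic g a b" and t: "t \<in> {0..1}"
  shows "geo_comb t (g a) (g b) = g ((1-t)*a + t*b)"
  unfolding geo_comb_def
proof (rule the_equality)
  show "\<exists>h c e. geodesic h c e \<and> h c = g a \<and> h e = g b \<and> g ((1-t)*a + t*b) = h ((1-t)*c + t*e)"
    using g by blast
next
  fix q
  assume "\<exists>h c e. geodesic h c e \<and> h c = g a \<and> h e = g b \<and> q = h ((1-t)*c + t*e)"
  then obtain h c e where h: "geodesic h c e" "h c = g a" "h e = g b" "q = h ((1-t)*c + t*e)"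
    by blast
  note dg = geodesic_dist_convex_combination[OF g t]
    and dh = geodesic_dist_convex_combination[OF h(1) t]
  have len: "e - c = b - a" using dg(3) dh(3) h by simp
  have qa: "dist q (g a) = t*(b-a)" and qb: "dist q (g b) = (1-t)*(b-a)"
    using dh(1,2) h len by (simp_all add: dist_commute)
  have "(dist q (g ((1-t)*a + t*b)))\<^sup>2
          \<le> (1-t)*(dist q (g a))\<^sup>2 + t*(dist q (g b))\<^sup>2 - t*(1-t)*(dist (g a) (g b))\<^sup>2"
    using CAT0_inequality[OF cat g t] .
  also have "\<dots> = 0"
    unfolding qa qb dg(3) by (simp add: power2_eq_square algebra_simps)
  finally show "q = g ((1-t)*a + t*b)" by simp
qed

lemma CAT0_dist_geo_comb:
  fixes x y z :: "'a::metric_space"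
  assumes cat: "CAT0 TYPE('a)" and t: "t \<in> {0..1}"
  shows "(dist z (geo_comb t x y))\<^sup>2
           \<le> (1-t)*(dist z x)\<^sup>2 + t*(dist z y)\<^sup>2 - t*(1-t)*(dist x y)\<^sup>2"
proof -
  obtain g a b where g: "geodesic g a b" "g a = x" "g b = y"
    using cat unfolding CAT0_def geodesic_space_def by blast
  show ?thesis
    using CAT0_inequality[OF cat g(1) t, of z] CAT0_geo_comb_eq[OF cat g(1) t] g(2,3) by simp
qed

lemma CAT0_dist_geo_comb_geo_comb:
  fixes x x' y y' :: "'a::metric_space"
  assumes cat: "CAT0 TYPE('a)" and s: "s \<in> {0..1}" and r: "r \<in> {0..1}"
  shows "(dist (geo_comb s x x') (geo_comb r y y'))\<^sup>2
           \<le> (1-s)*(1-r)*(dist x y)\<^sup>2 + (1-s)*r*(dist x y')\<^sup>2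
              + s*(1-r)*(dist x' y)\<^sup>2 + s*r*(dist x' y')\<^sup>2
              - s*(1-s)*(dist x x')\<^sup>2 - r*(1-r)*(dist y y')\<^sup>2"
proof -
  define q where "q = geo_comb r y y'"
  have to_x: "(dist q x)\<^sup>2 \<le> (1-r)*(dist x y)\<^sup>2 + r*(dist x y')\<^sup>2 - r*(1-r)*(dist y y')\<^sup>2"
    using CAT0_dist_geo_comb[OF cat r, of x y y'] by (simp add: q_def dist_commute)
  have to_x': "(dist q x')\<^sup>2 \<le> (1-r)*(dist x' y)\<^sup>2 + r*(dist x' y')\<^sup>2 - r*(1-r)*(dist y y')\<^sup>2"
    using CAT0_dist_geo_comb[OF cat r, of x' y y'] by (simp add: q_def dist_commute)
  have "(dist (geo_comb s x x') q)\<^sup>2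
          \<le> (1-s)*(dist q x)\<^sup>2 + s*(dist q x')\<^sup>2 - s*(1-s)*(dist x x')\<^sup>2"
    using CAT0_dist_geo_comb[OF cat s, of q x x'] by (simp add: dist_commute)
  also have "\<dots> \<le> (1-s)*((1-r)*(dist x y)\<^sup>2 + r*(dist x y')\<^sup>2 - r*(1-r)*(dist y y')\<^sup>2)
                  + s*((1-r)*(dist x' y)\<^sup>2 + r*(dist x' y')\<^sup>2 - r*(1-r)*(dist y y')\<^sup>2)
                  - s*(1-s)*(dist x x')\<^sup>2"
    using s to_x to_x' by (intro diff_right_mono add_mono mult_left_mono) auto
  finally show ?thesis by (simp add: q_def algebra_simps)
qed

lemma nonneg_if_nonneg_perturbations:
  fixes A B c :: real
  assumes c: "c > 0" and h: "\<And>t. 0 < t \<Longrightarrow> t \<le> c \<Longrightarrow> 0 \<le> t*A + B"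
  shows "0 \<le> B"
proof (rule ccontr)
  assume "\<not> 0 \<le> B"
  hence B: "B < 0" by simp
  define t where "t = min c (-B/(\<bar>A\<bar>+1))"
  have t: "0 < t" "t \<le> c" using c B by (auto simp: t_def divide_neg_pos)
  have "t*(\<bar>A\<bar>+1) \<le> -B"
    using pos_le_divide_eq[of "\<bar>A\<bar>+1" t "-B"] by (simp add: t_def)
  moreover have "t*A \<le> t*\<bar>A\<bar>" using t by (intro mult_left_mono) auto
  ultimately show False using h[OF t] t by (simp add: algebra_simps)
qed

text \<open>\<open>X, Y, Z, W, U, V\<close> stand for the squared distances
  \<open>d(x,y), d(x,y'), d(x',y), d(x',y'), d(x,x'), d(y,y')\<close> with \<open>x' = T\<^sub>nx\<close>, \<open>y' = T\<^sub>my\<close>, and the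
  hypothesis is the bound of CAT0_dist_geo_comb_geo_comb at \<open>1-s = t/g\<^sub>n\<close>, \<open>1-r = t/g\<^sub>m\<close>.\<close>
lemma P2_inequality_if_perturbation_bound:
  fixes X Y Z W U V gn gm :: real
  assumes gn: "gn > 0" and gm: "gm > 0"
    and bound: "\<And>t. 0 < t \<Longrightarrow> t \<le> min gn gm \<Longrightarrow>
      W \<le> (t/gn)*(t/gm)*X + (t/gn)*(1 - t/gm)*Y + (1 - t/gn)*(t/gm)*Z
           + (1 - t/gn)*(1 - t/gm)*W - (1 - t/gn)*(t/gn)*U - (1 - t/gm)*(t/gm)*V"
  shows "(1/gm)*(W + V - Z) \<le> (1/gn)*(Y - U - W)"
proof -
  define B where "B = (1/gn)*(Y - U - W) + (1/gm)*(Z - W - V)"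
  define C where "C = (X - Y - Z + W)/(gn*gm) + V/gm^2 + U/gn^2"
  have perturbed: "0 \<le> t*C + B" if t: "0 < t" "t \<le> min gn gm" for t
  proof -
    have "(t/gn)*(t/gm)*X + (t/gn)*(1 - t/gm)*Y + (1 - t/gn)*(t/gm)*Z
           + (1 - t/gn)*(1 - t/gm)*W - (1 - t/gn)*(t/gn)*U - (1 - t/gm)*(t/gm)*V - W
          = t*(t*C + B)"
      using gn gm by (simp add: B_def C_def field_simps power2_eq_square)
    then have "0 \<le> t*(t*C + B)" using bound[OF t] by linarith
    then show ?thesis using t by (simp add: zero_le_mult_iff)
  qed
  have "0 \<le> B"
    by (rule nonneg_if_nonneg_perturbations[of "min gn gm" C]) (use gn gm perturbed in auto)
  then show ?thesis by (simp add: B_def algebra_simps)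
qed

lemma jointly_firmly_nonexpansiveD:
  assumes "jointly_firmly_nonexpansive T gam" and "gam n > 0" and "gam m > 0"
    and "0 < t" and "t \<le> gam n" and "t \<le> gam m"
  shows "dist (T n x) (T m y)
           \<le> dist (geo_comb (1 - t/gam n) x (T n x)) (geo_comb (1 - t/gam m) y (T m y))"
proof -
  have "1 - t/gam n \<in> {0..1}" "1 - t/gam m \<in> {0..1}"
    using assms(2-) by auto
  moreover have "(1 - (1 - t/gam n)) * gam n = (1 - (1 - t/gam m)) * gam m"
    using assms(2,3) by simp
  ultimately show ?thesis
    using assms(1) unfolding jointly_firmly_nonexpansive_def by blast
qed

theorem proposition3p9:
  fixes T :: "nat \<Rightarrow> 'a::metric_space \<Rightarrow> 'a" and gam :: "nat \<Rightarrow> real"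
  assumes "CAT0 TYPE('a)"
    and "\<And>n. gam n > 0"
    and "jointly_firmly_nonexpansive T gam"
  shows "jointly_P2 T gam"
  unfolding jointly_P2_def
proof (intro allI)
  fix n m x y
  have gn: "gam n > 0" and gm: "gam m > 0" using assms(2) by auto
  have "(1/gam m)*((dist (T n x) (T m y))\<^sup>2 + (dist y (T m y))\<^sup>2 - (dist (T n x) y)\<^sup>2)
      \<le> (1/gam n)*((dist x (T m y))\<^sup>2 - (dist x (T n x))\<^sup>2 - (dist (T n x) (T m y))\<^sup>2)"
  proof (rule P2_inequality_if_perturbation_bound[OF gn gm])
    fix t assume t: "0 < t" "t \<le> min (gam n) (gam m)"
    then have params: "1 - t/gam n \<in> {0..1}" "1 - t/gam m \<in> {0..1}"
      using gn gm by auto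
    have firm: "(dist (T n x) (T m y))\<^sup>2
        \<le> (dist (geo_comb (1 - t/gam n) x (T n x)) (geo_comb (1 - t/gam m) y (T m y)))\<^sup>2"
      using jointly_firmly_nonexpansiveD[OF assms(3) gn gm, of t x y] t by (simp add: power_mono)
    from order_trans[OF firm CAT0_dist_geo_comb_geo_comb[OF assms(1) params]] show "(dist (T n x) (T m y))\<^sup>2
        \<le> (t/gam n)*(t/gam m)*(dist x y)\<^sup>2 + (t/gam n)*(1 - t/gam m)*(dist x (T m y))\<^sup>2
           + (1 - t/gam n)*(t/gam m)*(dist (T n x) y)\<^sup>2
           + (1 - t/gam n)*(1 - t/gam m)*(dist (T n x) (T m y))\<^sup>2
           - (1 - t/gam n)*(t/gam n)*(dist x (T n x))\<^sup>2
           - (1 - t/gam m)*(t/gam m)*(dist y (T m y))\<^sup>2"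
      by (simp add: algebra_simps)
  qed
  then show "1 / gam m * ((dist (T n x) (T m y))\<^sup>2 + (dist y (T m y))\<^sup>2 - (dist y (T n x))\<^sup>2)
       \<le> 1 / gam n * ((dist x (T m y))\<^sup>2 - (dist x (T n x))\<^sup>2 - (dist (T n x) (T m y))\<^sup>2)"
    by (simp add: dist_commute)
qed

end
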